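(* Assume the setting described in the context. There is a generalized $C$-sequence $\langle e^m_\alpha:\alpha<\lambda,m<\omega\rangle$ on $\lambda$ such that for all $\alpha<\lambda$ and $m<\omega$: (1) $|e^m_\alpha|\leq\mathrm{cf}(\alpha)+\mu_m^+$, and (2) if $\delta\in S\cap e^m_\alpha$ then $C_\delta[m]\subseteq e^m_\alpha$.
   Context: Setting: $\mu$ is a singular cardinal with $\mathrm{cf}(\mu)=\aleph_0$, $\lambda=\mu^+$, $\sigma$ is regular with $\aleph_0<\sigma<\mu$, $S$ is a stationary subset of $\{\delta<\lambda:\mathrm{cf}(\delta)=\sigma\}$, and $\langle\mu_i:i<\omega\rangle$ is a strictly increasing sequence of regular cardinals cofinal in $\mu$ with $\sigma<\mu_0$. For $\delta\in S$, $c^0_\delta$ is the increasing enumeration of a club subset of $\delta$ of order type $\sigma$, and for every club $E\subseteq\lambda$ the set of $\delta\in S$ with $\mathrm{ran}(c^0_\delta)\subseteq E$ is stationary. $I(\delta,\epsilon,m)=(c^0_\delta(\omega\cdot\epsilon+m),c^0_\delta(\omega\cdot\epsilon+m+1)]$ for $\epsilon<\sigma$, $m<\omega$. $\langle C_\delta:\delta\in S\rangle$ satisfies: $C_\delta$ club in $\delta$; $\mathrm{ran}(c^0_\delta)\subseteq C_\delta$; $|C_\delta\cap I(\delta,\epsilon,m)|\leq\mu_m^+$; every $\alpha\in\mathrm{nacc}(C_\delta)\cap I(\delta,\epsilon,m)$ has $\mathrm{cf}(\alpha)>\mu_m^+$; for every club $E\subseteq\lambda$ there are stationarily many $\delta\in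 S$ with $E\cap\mathrm{nacc}(C_\delta)\cap I(\delta,\epsilon,m)\neq\emptyset$ for all $\epsilon,m$. ($\mathrm{nacc}(C)=C\setminus\{\alpha:\alpha=\sup(\alpha\cap C)\}$.) $C_\delta[m]=\mathrm{ran}(c^0_\delta)\cup\bigcup\{C_\delta\cap I(\delta,\epsilon,i):\epsilon<\sigma, i\leq m\}$. A generalized $C$-sequence on $\lambda$ is a family $\langle e^m_\alpha:\alpha<\lambda,m<\omega\rangle$ such that each $e^m_\alpha$ is closed unbounded in $\alpha$ and $e^m_\alpha\subseteq e^{m+1}_\alpha$. *)

theory Defs
  imports Main
begin

text \<open>Ordinals below lambda are modelled as the elements of a type 'a of class wellorder
  whose order type is lambda; all cardinals involved are elements of this type
  (initial ordinals below lambda).\<close>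

definition card_le :: "'b set \<Rightarrow> 'c set \<Rightarrow> bool" where
  "card_le A B \<longleftrightarrow> (card_of A, card_of B) \<in> ordLeq"

definition card_less :: "'b set \<Rightarrow> 'c set \<Rightarrow> bool" where
  "card_less A B \<longleftrightarrow> (card_of A, card_of B) \<in> ordLess"

definition card_eq :: "'b set \<Rightarrow> 'c set \<Rightarrow> bool" where
  "card_eq A B \<longleftrightarrow> (card_of A, card_of B) \<in> ordIso"

definition zero_o :: "'a::wellorder" where
  "zero_o = (LEAST x. True)"

definition osucc :: "'a::wellorder \<Rightarrow> 'a" where
  "osucc x = (LEAST y. x < y)"

definition is_lim :: "'a::wellorder \<Rightarrow> bool" where
  "is_lim x \<longleftrightarrow> (\<exists>y. y < x) \<and> (\<forall>y<x. \<exists>z. y < z \<and> z < x)"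

definition omega_o :: "'a::wellorder" where
  "omega_o = (LEAST x. is_lim x)"

text \<open>zero together with the limit ordinals: the ordinals of the form omega * epsilon\<close>
definition lims0 :: "'a::wellorder set" where
  "lims0 = {x. x = zero_o \<or> is_lim x}"

definition omega_times :: "'a::wellorder \<Rightarrow> 'a" where
  "omega_times \<epsilon> = (THE \<eta>. \<eta> \<in> lims0 \<and>
      (\<exists>f. strict_mono_on {..<\<epsilon>} f \<and> f ` {..<\<epsilon>} = {x \<in> lims0. x < \<eta>}))"

definition om_plus :: "'a::wellorder \<Rightarrow> nat \<Rightarrow> 'a" where
  "om_plus \<epsilon> m = (osucc ^^ m) (omega_times \<epsilon>)"

definition cf :: "'a::wellorder \<Rightarrow> 'a" where
  "cf \<alpha> = (LEAST \<kappa>. \<exists>A. A \<subseteq> {..<\<alpha>} \<and> (\<forall>\<beta><\<alpha>. \<exists>\<gamma>\<in>A. \<beta> \<le> \<gamma>) \<and> card_eq A {..<\<kappa>})"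

definition is_cardinal :: "'a::wellorder \<Rightarrow> bool" where
  "is_cardinal \<kappa> \<longleftrightarrow> (\<forall>y<\<kappa>. \<not> card_eq {..<y} {..<\<kappa>})"

definition csucc :: "'a::wellorder \<Rightarrow> 'a" where
  "csucc \<kappa> = (LEAST x. card_less {..<\<kappa>} {..<x})"

definition regular :: "'a::wellorder \<Rightarrow> bool" where
  "regular \<kappa> \<longleftrightarrow> omega_o \<le> \<kappa> \<and> cf \<kappa> = \<kappa>"

definition acc_pt :: "'a::wellorder set \<Rightarrow> 'a \<Rightarrow> bool" where
  "acc_pt C \<beta> \<longleftrightarrow> (\<exists>\<gamma>. \<gamma> < \<beta>) \<and> (\<forall>\<gamma><\<beta>. \<exists>c\<in>C. \<gamma> < c \<and> c < \<beta>)"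

definition nacc :: "'a::wellorder set \<Rightarrow> 'a set" where
  "nacc C = {\<alpha> \<in> C. \<not> acc_pt C \<alpha>}"

definition club_in :: "'a::wellorder set \<Rightarrow> 'a \<Rightarrow> bool" where
  "club_in C \<delta> \<longleftrightarrow> C \<subseteq> {..<\<delta>} \<and> (\<forall>\<beta><\<delta>. acc_pt C \<beta> \<longrightarrow> \<beta> \<in> C)
      \<and> (\<forall>\<beta><\<delta>. \<exists>\<gamma>\<in>C. \<beta> \<le> \<gamma>)"

definition club :: "'a::wellorder set \<Rightarrow> bool" where
  "club E \<longleftrightarrow> (\<forall>\<beta>. acc_pt E \<beta> \<longrightarrow> \<beta> \<in> E) \<and> (\<forall>\<beta>. \<exists>\<gamma>\<in>E. \<beta> \<le> \<gamma>)"

definition stationary :: "'a::wellorder set \<Rightarrow> bool" where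
  "stationary T \<longleftrightarrow> (\<forall>E. club E \<longrightarrow> T \<inter> E \<noteq> {})"

definition Iv :: "('a::wellorder \<Rightarrow> 'a \<Rightarrow> 'a) \<Rightarrow> 'a \<Rightarrow> 'a \<Rightarrow> nat \<Rightarrow> 'a set" where
  "Iv c0 \<delta> \<epsilon> m = {x. c0 \<delta> (om_plus \<epsilon> m) < x \<and> x \<le> c0 \<delta> (om_plus \<epsilon> (Suc m))}"

definition Cm :: "('a::wellorder \<Rightarrow> 'a \<Rightarrow> 'a) \<Rightarrow> ('a \<Rightarrow> 'a set) \<Rightarrow> 'a \<Rightarrow> 'a \<Rightarrow> nat \<Rightarrow> 'a set" where
  "Cm c0 C \<sigma> \<delta> m = c0 \<delta> ` {..<\<sigma>} \<union>
      (\<Union>\<epsilon>\<in>{..<\<sigma>}. \<Union>i\<in>{..m}. C \<delta> \<inter> Iv c0 \<delta> \<epsilon> i)"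

end

theory Submission imports Defs begin

text \<open>Starting from a cofinal subset of \<open>\<alpha>\<close> of size \<open>cf \<alpha>\<close>,
  close \<omega> times alternately under \<open>\<delta> \<mapsto> C\<^sub>\<delta>[m]\<close> (for \<open>\<delta> \<in> S\<close>) and under limits below \<open>\<alpha>\<close>;
  \<open>e\<^sup>m\<^sub>\<alpha>\<close> is the closure of the union of the stages. Every stage has size at most
  \<open>cf \<alpha> + \<mu>\<^sub>m\<^sup>+\<close>, and the result is club in \<open>\<alpha>\<close>. A point of \<open>e\<^sup>m\<^sub>\<alpha>\<close> reached at no finite stage
  is a limit of the union of the stages but of none of them, so it has countable cofinality.
  Points of \<open>S\<close> have cofinality \<open>\<sigma> > \<aleph>\<^sub>0\<close>, so each \<open>\<delta> \<in> S \<inter> e\<^sup>m\<^sub>\<alpha>\<close> was reached at some stage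
  and \<open>C\<^sub>\<delta>[m]\<close> was added at the next one. Monotonicity in \<open>m\<close> comes from
  \<open>C\<^sub>\<delta>[m] \<subseteq> C\<^sub>\<delta>[m+1]\<close>.\<close>

section \<open>Cardinality comparisons\<close>

definition le_rel :: "'a::wellorder rel" where
  "le_rel = {(x, y). x \<le> y}"

lemma Well_order_le_rel: "Well_order (le_rel :: 'a::wellorder rel)"
proof -
  have "Field (le_rel :: 'a rel) = UNIV" unfolding le_rel_def Field_def by auto
  moreover have "well_order_on UNIV (le_rel :: 'a rel)"
    unfolding well_order_on_def linear_order_on_def partial_order_on_def preorder_on_def
      refl_on_def trans_def antisym_def total_on_def
  proof (intro conjI)
    have "le_rel - Id = {(x :: 'a, y). x < y}" unfolding le_rel_def by auto
    then show "wf (le_rel - Id :: 'a rel)" using wf by simp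
  qed (auto simp: le_rel_def)
  ultimately show ?thesis by simp
qed

lemma card_le_trans: "card_le A B \<Longrightarrow> card_le B C \<Longrightarrow> card_le A C"
  unfolding card_le_def using ordLeq_transitive by blast

lemma card_le_subset: "A \<subseteq> B \<Longrightarrow> card_le A B"
  unfolding card_le_def by (rule card_of_mono1)

lemma card_le_empty: "card_le {} A"
  unfolding card_le_def by (rule card_of_empty)

lemma card_le_image: "card_le (f ` A) A"
  unfolding card_le_def by (rule card_of_image)

lemma card_le_inj_on: "inj_on f A \<Longrightarrow> f ` A \<subseteq> B \<Longrightarrow> card_le A B"
  unfolding card_le_def using card_of_ordLeq by blast

lemma card_eq_imp_card_le: "card_eq A B \<Longrightarrow> card_le A B"
  unfolding card_eq_def card_le_def by (simp add: ordIso_iff_ordLeq)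

lemma card_le_antisym: "card_le A B \<Longrightarrow> card_le B A \<Longrightarrow> card_eq A B"
  unfolding card_eq_def card_le_def by (simp add: ordIso_iff_ordLeq)

lemma card_le_Un_infinite: "infinite B \<Longrightarrow> card_le X B \<Longrightarrow> card_le Y B \<Longrightarrow> card_le (X \<union> Y) B"
  unfolding card_le_def
  by (rule card_of_Un_ordLeq_infinite_Field) (auto simp: Field_card_of card_of_card_order_on)

lemma card_le_UN_infinite:
  "infinite B \<Longrightarrow> card_le I B \<Longrightarrow> \<forall>i\<in>I. card_le (A i) B \<Longrightarrow> card_le (\<Union>i\<in>I. A i) B"
  unfolding card_le_def by (rule card_of_UNION_ordLeq_infinite)

lemma card_le_finite_infinite: "finite A \<Longrightarrow> infinite B \<Longrightarrow> card_le A B"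
  unfolding card_le_def
  by (rule ordLess_imp_ordLeq, rule finite_ordLess_infinite)
    (auto simp: Field_card_of card_of_well_order_on)

lemma card_le_nat_infinite: "infinite B \<Longrightarrow> card_le (UNIV :: nat set) B"
  unfolding card_le_def by (simp add: infinite_iff_card_of_nat)

lemma card_eq_initial_segment:
  fixes D :: "'a::wellorder set"
  assumes "D \<subseteq> {..<\<delta>}"
  shows "\<exists>a\<le>\<delta>. card_eq D {..<a}"
proof -
  define r where "r = Restr (le_rel :: 'a rel) {..<\<delta>}"
  have W: "Well_order r" unfolding r_def by (rule Well_order_Restr[OF Well_order_le_rel])
  have F: "Field r = {..<\<delta>}" unfolding r_def le_rel_def Field_def by auto
  have "(card_of {..<\<delta>}, r) \<in> ordLeq" using card_of_least W F well_order_on_Field by metis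
  then have D_le: "(card_of D, r) \<in> ordLeq"
    using card_of_mono1[OF assms] ordLeq_transitive by blast
  show ?thesis
  proof (cases "(card_of D, r) \<in> ordLess")
    case True
    then obtain a where a: "a \<in> Field r" "(card_of D, Restr r (underS r a)) \<in> ordIso"
      using ordLess_iff_ordIso_Restr[OF W card_of_Well_order] by blast
    have "a < \<delta>" using a F by auto
    then have "underS r a = {..<a}" "Field (Restr r {..<a}) = {..<a}"
      unfolding underS_def r_def le_rel_def Field_def by auto
    then have "(card_of D, card_of {..<a}) \<in> ordIso"
      using a(2) card_of_mono2 Field_card_of ordIso_iff_ordLeq by metis
    then show ?thesis using \<open>a < \<delta>\<close> card_eq_def less_imp_le by blast
  next
    case False
    then have "(card_of D, r) \<in> ordIso" using D_le ordLeq_iff_ordLess_or_ordIso by blast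
    then have "(card_of D, card_of {..<\<delta>}) \<in> ordIso"
      using F card_of_mono2 Field_card_of ordIso_iff_ordLeq by metis
    then show ?thesis using card_eq_def by blast
  qed
qed

section \<open>Ordinals, cofinality and cardinal successors\<close>

lemma zero_o_le: "zero_o \<le> (x :: 'a::wellorder)"
  unfolding zero_o_def by (rule Least_le) simp

lemma lessThan_osucc_zero_o:
  assumes "zero_o < (s :: 'a::wellorder)"
  shows "{..<osucc zero_o} = {zero_o :: 'a}"
proof safe
  show "zero_o < osucc (zero_o :: 'a)" unfolding osucc_def by (rule LeastI[of _ s]) (rule assms)
  fix z assume "z < osucc (zero_o :: 'a)"
  then have "\<not> zero_o < z" unfolding osucc_def using not_less_Least by blast
  then show "z = zero_o" using zero_o_le[of z] by simp
qed

lemma is_lim_infinite: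
  assumes "is_lim (x :: 'a::wellorder)"
  shows "infinite {..<x}"
proof
  assume fin: "finite {..<x}"
  obtain y where "y < x" using assms is_lim_def by auto
  then have "Max {..<x} < x" using Max_in[OF fin] by auto
  then obtain z where "Max {..<x} < z" "z < x" using assms is_lim_def by auto
  then show False using Max_ge[OF fin, of z] by simp
qed

lemma cf_witness:
  "\<exists>A. A \<subseteq> {..<\<alpha>} \<and> (\<forall>\<beta><\<alpha>. \<exists>\<gamma>\<in>A. \<beta> \<le> \<gamma>) \<and> card_eq A {..<cf (\<alpha> :: 'a::wellorder)}"
  unfolding cf_def by (rule LeastI[of _ \<alpha>]) (auto simp: card_eq_def card_of_refl)

lemma cf_least:
  "A \<subseteq> {..<\<alpha>} \<Longrightarrow> \<forall>\<beta><\<alpha>. \<exists>\<gamma>\<in>A. \<beta> \<le> \<gamma> \<Longrightarrow> card_eq A {..<\<kappa>} \<Longrightarrow> cf (\<alpha> :: 'a::wellorder) \<le> \<kappa>"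
  unfolding cf_def by (rule Least_le) blast

lemma card_le_cf:
  fixes D :: "'a::wellorder set"
  assumes "D \<subseteq> {..<\<delta>}" "\<forall>\<beta><\<delta>. \<exists>\<gamma>\<in>D. \<beta> \<le> \<gamma>"
  shows "card_le {..<cf \<delta>} D"
proof -
  obtain a :: 'a where "card_eq D {..<a}" using card_eq_initial_segment[OF assms(1)] by blast
  moreover from this have "cf \<delta> \<le> a" using cf_least assms by blast
  then have "card_le {..<cf \<delta>} {..<a}" by (intro card_le_subset) auto
  ultimately show ?thesis unfolding card_le_def card_eq_def
    using ordIso_iff_ordLeq ordLeq_transitive by blast
qed

lemma cf_eq_zero_o:
  assumes "cf x = zero_o"
  shows "x = (zero_o :: 'a::wellorder)"
proof (rule ccontr)
  assume "x \<noteq> zero_o"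
  then have "zero_o < x" using zero_o_le[of x] by simp
  obtain A where A: "\<forall>\<beta><x. \<exists>\<gamma>\<in>A. \<beta> \<le> \<gamma>" "card_eq A {..<cf x}" using cf_witness by blast
  have "{..<cf x} = {}" using assms zero_o_le by (auto simp: not_less[symmetric])
  then have "A = {}" using A(2) card_of_empty2 unfolding card_eq_def by auto
  then show False using A(1) \<open>zero_o < x\<close> by blast
qed

lemma cf_le_osucc_zero_o:
  assumes "zero_o < \<alpha>" "\<not> is_lim (\<alpha> :: 'a::wellorder)"
  shows "cf \<alpha> \<le> osucc zero_o"
proof -
  obtain y where y: "y < \<alpha>" "\<forall>z. \<not> (y < z \<and> z < \<alpha>)" using assms unfolding is_lim_def by blast
  then have "\<forall>\<beta><\<alpha>. \<exists>\<gamma>\<in>{y}. \<beta> \<le> \<gamma>" using not_less by blast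
  moreover have "card_eq {y} {..<osucc zero_o :: 'a}"
    unfolding lessThan_osucc_zero_o[OF assms(1)] card_eq_def
    by (rule card_of_ordIso[THEN iffD1]) (auto simp: bij_betw_def)
  ultimately show ?thesis using y(1) by (intro cf_least[of "{y}"]) auto
qed

lemma regular_is_lim:
  fixes \<sigma> :: "'a::wellorder"
  assumes "regular \<sigma>" "omega_o < \<sigma>" "omega_o \<noteq> (zero_o :: 'a)"
  shows "is_lim \<sigma>"
proof (rule ccontr)
  assume "\<not> is_lim \<sigma>"
  have "zero_o < \<sigma>" using le_less_trans[OF zero_o_le assms(2)] .
  have "\<sigma> = cf \<sigma>" using assms(1) unfolding regular_def by simp
  also have "\<dots> \<le> osucc zero_o" using cf_le_osucc_zero_o \<open>zero_o < \<sigma>\<close> \<open>\<not> is_lim \<sigma>\<close> by blast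
  finally have "omega_o \<in> {..<osucc zero_o :: 'a}" using assms(2) by (auto intro: less_le_trans)
  then show False using assms(3) lessThan_osucc_zero_o[OF \<open>zero_o < \<sigma>\<close>] by blast
qed

lemma regular_uncountable:
  fixes \<sigma> :: "'a::wellorder"
  assumes "regular \<sigma>" "omega_o < \<sigma>" "omega_o \<noteq> (zero_o :: 'a)"
  shows "\<not> card_le {..<\<sigma>} (UNIV :: nat set)"
proof
  assume countable: "card_le {..<\<sigma>} (UNIV :: nat set)"
  have "is_lim (omega_o :: 'a)"
    unfolding omega_o_def by (rule LeastI[of is_lim \<sigma>]) (rule regular_is_lim[OF assms])
  then have "card_le (UNIV :: nat set) {..<omega_o :: 'a}"
    by (intro card_le_nat_infinite is_lim_infinite)
  then have "card_eq {..<\<sigma>} {..<omega_o :: 'a}"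
    using assms(2) by (intro card_le_antisym card_le_trans[OF countable] card_le_subset) auto
  then have "cf \<sigma> \<le> omega_o" by (intro cf_least[of "{..<\<sigma>}"]) auto
  then show False using assms(1,2) unfolding regular_def by simp
qed

lemma csucc_card_less:
  fixes \<kappa> x :: "'a::wellorder"
  shows "card_less {..<\<kappa>} {..<x} \<Longrightarrow> card_less {..<\<kappa>} {..<csucc \<kappa>}"
  unfolding csucc_def by (rule LeastI[of "\<lambda>y. card_less {..<\<kappa>} {..<y}"])

lemma less_csucc:
  fixes \<kappa> x :: "'a::wellorder"
  assumes "card_less {..<\<kappa>} {..<x}"
  shows "\<kappa> < csucc \<kappa>"
proof (rule ccontr)
  assume "\<not> \<kappa> < csucc \<kappa>"
  then have "card_le {..<csucc \<kappa>} {..<\<kappa>}" by (intro card_le_subset) (simp add: not_less)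
  then show False using csucc_card_less[OF assms]
    unfolding card_le_def card_less_def using not_ordLess_ordLeq by blast
qed

lemma csucc_mono:
  fixes \<kappa> \<kappa>' x :: "'a::wellorder"
  assumes "\<kappa> \<le> \<kappa>'" "card_less {..<\<kappa>'} {..<x}"
  shows "csucc \<kappa> \<le> csucc \<kappa>'"
  unfolding csucc_def[of \<kappa>]
proof (rule Least_le)
  have "card_le {..<\<kappa>} {..<\<kappa>'}" using assms(1) by (intro card_le_subset) auto
  then show "card_less {..<\<kappa>} {..<csucc \<kappa>'}" using csucc_card_less[OF assms(2)]
    unfolding card_le_def card_less_def by (rule ordLeq_ordLess_trans)
qed

lemma card_less_below_cardinal:
  assumes "is_cardinal \<mu>" "\<kappa> < (\<mu> :: 'a::wellorder)"
  shows "card_less {..<\<kappa>} {..<\<mu>}"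
proof -
  have "card_le {..<\<kappa>} {..<\<mu>}" using assms(2) by (intro card_le_subset) auto
  moreover have "\<not> card_eq {..<\<kappa>} {..<\<mu>}" using assms unfolding is_cardinal_def by blast
  ultimately show ?thesis unfolding card_le_def card_eq_def card_less_def
    using ordLeq_iff_ordLess_or_ordIso by blast
qed

lemma less_csucc_below_cardinal:
  fixes \<kappa> \<mu> :: "'a::wellorder"
  shows "is_cardinal \<mu> \<Longrightarrow> \<kappa> < \<mu> \<Longrightarrow> \<kappa> < csucc \<kappa>"
  by (rule less_csucc[OF card_less_below_cardinal])

lemma csucc_mono_below_cardinal:
  fixes \<kappa> \<kappa>' \<mu> :: "'a::wellorder"
  shows "is_cardinal \<mu> \<Longrightarrow> \<kappa> \<le> \<kappa>' \<Longrightarrow> \<kappa>' < \<mu> \<Longrightarrow> csucc \<kappa> \<le> csucc \<kappa>'"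
  by (rule csucc_mono[OF _ card_less_below_cardinal])

section \<open>Closure under limits below an ordinal\<close>

definition closure_below :: "'a::wellorder \<Rightarrow> 'a set \<Rightarrow> 'a set" where
  "closure_below \<alpha> X = X \<union> {\<beta>. \<beta> < \<alpha> \<and> acc_pt X \<beta>}"

lemma closure_below_increasing: "X \<subseteq> closure_below \<alpha> X"
  unfolding closure_below_def by auto

lemma acc_pt_mono: "X \<subseteq> Y \<Longrightarrow> acc_pt X \<beta> \<Longrightarrow> acc_pt Y \<beta>"
  unfolding acc_pt_def by blast

lemma closure_below_mono: "X \<subseteq> Y \<Longrightarrow> closure_below \<alpha> X \<subseteq> closure_below \<alpha> Y"
  unfolding closure_below_def using acc_pt_mono by blast

lemma closure_below_subset: "X \<subseteq> {..<\<alpha>} \<Longrightarrow> closure_below \<alpha> X \<subseteq> {..<\<alpha>}"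
  unfolding closure_below_def by auto

lemma acc_pt_closure_below:
  assumes "acc_pt (closure_below \<alpha> X) \<beta>"
  shows "acc_pt X \<beta>"
  unfolding acc_pt_def
proof (intro conjI allI impI)
  show "\<exists>\<gamma>. \<gamma> < \<beta>" using assms acc_pt_def by blast
  fix \<gamma> assume "\<gamma> < \<beta>"
  then obtain c where c: "c \<in> closure_below \<alpha> X" "\<gamma> < c" "c < \<beta>"
    using assms acc_pt_def by blast
  show "\<exists>c\<in>X. \<gamma> < c \<and> c < \<beta>"
  proof (cases "c \<in> X")
    case False
    then have "acc_pt X c" using c(1) closure_below_def by auto
    then obtain d where "d \<in> X" "\<gamma> < d" "d < c" using c(2) acc_pt_def by blast
    then show ?thesis using c(3) by (meson less_trans)
  qed (use c in blast)
qed

lemma closure_below_closed: "\<beta> < \<alpha> \<Longrightarrow> acc_pt (closure_below \<alpha> X) \<beta> \<Longrightarrow> \<beta> \<in> closure_below \<alpha> X"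
  using acc_pt_closure_below unfolding closure_below_def by blast

text \<open>An accumulation point with an element of \<open>X\<close> above it is determined by the least
  such element, since two of them are separated by an element of \<open>X\<close>.\<close>

lemma card_le_bounded_acc_pts: "card_le {\<beta>. acc_pt X \<beta> \<and> (\<exists>x\<in>X. \<beta> < x)} X"
proof -
  define T where "T = {\<beta>. acc_pt X \<beta> \<and> (\<exists>x\<in>X. \<beta> < x)}"
  define f where "f \<beta> = (LEAST x. x \<in> X \<and> \<beta> < x)" for \<beta>
  have f: "f \<beta> \<in> X \<and> \<beta> < f \<beta>" if "\<beta> \<in> T" for \<beta>
  proof -
    from that obtain x where "x \<in> X \<and> \<beta> < x" unfolding T_def by blast
    then show ?thesis unfolding f_def by (rule LeastI[of "\<lambda>x. x \<in> X \<and> \<beta> < x"])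
  qed
  have f_less: "f b1 < f b2" if b2: "b2 \<in> T" and less: "b1 < b2" for b1 b2
  proof -
    have "acc_pt X b2" using b2 unfolding T_def by blast
    then obtain c where c: "c \<in> X" "b1 < c" "c < b2" using less unfolding acc_pt_def by blast
    have "f b1 \<le> c" unfolding f_def by (rule Least_le) (use c in blast)
    also have "c < f b2" using less_trans[OF c(3)] f[OF b2] by blast
    finally show ?thesis .
  qed
  have "inj_on f T"
  proof (rule inj_onI)
    fix b1 b2 assume "b1 \<in> T" "b2 \<in> T" "f b1 = f b2"
    then show "b1 = b2" using f_less[of b2 b1] f_less[of b1 b2] by (cases b1 b2 rule: linorder_cases) auto
  qed
  then show ?thesis unfolding T_def[symmetric] using f by (intro card_le_inj_on[of f]) auto
qed

lemma acc_pt_unbounded_unique: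
  assumes "acc_pt X b" "acc_pt X b'" "\<forall>x\<in>X. \<not> b < x" "\<forall>x\<in>X. \<not> b' < x"
  shows "b = b'"
  using assms unfolding acc_pt_def by (cases b b' rule: linorder_cases) blast+

lemma card_le_closure_below:
  assumes B: "infinite B" and X: "card_le X B"
  shows "card_le (closure_below \<alpha> X) B"
proof -
  define T1 where "T1 = {\<beta>. acc_pt X \<beta> \<and> (\<exists>x\<in>X. \<beta> < x)}"
  define T2 where "T2 = {\<beta>. acc_pt X \<beta> \<and> (\<forall>x\<in>X. \<not> \<beta> < x)}"
  have "card_le T1 B" unfolding T1_def by (rule card_le_trans[OF card_le_bounded_acc_pts X])
  moreover have "finite T2"
  proof (cases "T2 = {}")
    case False
    then obtain b where "b \<in> T2" by blast
    then have "T2 \<subseteq> {b}" using acc_pt_unbounded_unique unfolding T2_def by blast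
    then show ?thesis using finite_subset by blast
  qed simp
  then have "card_le T2 B" using card_le_finite_infinite B by blast
  ultimately have "card_le (X \<union> T1 \<union> T2) B" using card_le_Un_infinite[OF B] X by blast
  moreover have "closure_below \<alpha> X \<subseteq> X \<union> T1 \<union> T2"
    unfolding closure_below_def T1_def T2_def by auto
  ultimately show ?thesis by (blast intro: card_le_trans[OF card_le_subset])
qed

section \<open>Closing under a set-valued function and under limits\<close>

primrec hull_chain :: "('a::wellorder \<Rightarrow> 'a set) \<Rightarrow> 'a \<Rightarrow> 'a set \<Rightarrow> nat \<Rightarrow> 'a set" where
  "hull_chain F \<alpha> A 0 = closure_below \<alpha> A"
| "hull_chain F \<alpha> A (Suc n) =
     closure_below \<alpha> (hull_chain F \<alpha> A n \<union> (\<Union>\<delta>\<in>hull_chain F \<alpha> A n. F \<delta>))"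

definition closed_hull :: "('a::wellorder \<Rightarrow> 'a set) \<Rightarrow> 'a \<Rightarrow> 'a set \<Rightarrow> 'a set" where
  "closed_hull F \<alpha> A = closure_below \<alpha> (\<Union>n. hull_chain F \<alpha> A n)"

lemma hull_chain_mono_fun: "(\<And>\<delta>. F \<delta> \<subseteq> G \<delta>) \<Longrightarrow> hull_chain F \<alpha> A n \<subseteq> hull_chain G \<alpha> A n"
proof (induction n)
  case (Suc n)
  then have "hull_chain F \<alpha> A n \<union> (\<Union>\<delta>\<in>hull_chain F \<alpha> A n. F \<delta>)
      \<subseteq> hull_chain G \<alpha> A n \<union> (\<Union>\<delta>\<in>hull_chain G \<alpha> A n. G \<delta>)" by blast
  then show ?case by (simp add: closure_below_mono)
qed simp

lemma closed_hull_mono_fun: "(\<And>\<delta>. F \<delta> \<subseteq> G \<delta>) \<Longrightarrow> closed_hull F \<alpha> A \<subseteq> closed_hull G \<alpha> A"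
  unfolding closed_hull_def by (intro closure_below_mono UN_mono hull_chain_mono_fun) auto

lemma hull_chain_subset:
  assumes "A \<subseteq> {..<\<alpha>}" "\<And>\<delta>. F \<delta> \<subseteq> {..<\<delta>}"
  shows "hull_chain F \<alpha> A n \<subseteq> {..<\<alpha>}"
proof (induction n)
  case (Suc n)
  then have "(\<Union>\<delta>\<in>hull_chain F \<alpha> A n. F \<delta>) \<subseteq> {..<\<alpha>}" using assms(2) by fastforce
  then show ?case using Suc by (simp add: closure_below_subset)
qed (simp add: assms(1) closure_below_subset)

lemma hull_chain_Suc_contains:
  "\<delta> \<in> hull_chain F \<alpha> A n \<Longrightarrow> F \<delta> \<subseteq> hull_chain F \<alpha> A (Suc n)"
  using closure_below_increasing[of "hull_chain F \<alpha> A n \<union> (\<Union>\<delta>\<in>hull_chain F \<alpha> A n. F \<delta>)" \<alpha>]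
  by auto

lemma card_le_hull_chain:
  assumes "infinite B" "card_le A B" "\<And>\<delta>. card_le (F \<delta>) B"
  shows "card_le (hull_chain F \<alpha> A n) B"
proof (induction n)
  case (Suc n)
  then have "card_le (\<Union>\<delta>\<in>hull_chain F \<alpha> A n. F \<delta>) B" using card_le_UN_infinite assms by blast
  then show ?case using Suc by (simp add: card_le_closure_below card_le_Un_infinite assms(1))
qed (simp add: card_le_closure_below assms)

lemma hull_chain_closed: "\<beta> < \<alpha> \<Longrightarrow> acc_pt (hull_chain F \<alpha> A n) \<beta> \<Longrightarrow> \<beta> \<in> hull_chain F \<alpha> A n"
  by (cases n) (auto intro: closure_below_closed)

lemma closed_hull_club:
  assumes "A \<subseteq> {..<\<alpha>}" "\<forall>\<beta><\<alpha>. \<exists>\<gamma>\<in>A. \<beta> \<le> \<gamma>" "\<And>\<delta>. F \<delta> \<subseteq> {..<\<delta>}"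
  shows "club_in (closed_hull F \<alpha> A) \<alpha>"
  unfolding club_in_def
proof (intro conjI allI impI)
  have "(\<Union>n. hull_chain F \<alpha> A n) \<subseteq> {..<\<alpha>}" using hull_chain_subset[OF assms(1,3)] by blast
  then show "closed_hull F \<alpha> A \<subseteq> {..<\<alpha>}" unfolding closed_hull_def by (rule closure_below_subset)
  show "\<beta> \<in> closed_hull F \<alpha> A" if "\<beta> < \<alpha>" "acc_pt (closed_hull F \<alpha> A) \<beta>" for \<beta>
    using that unfolding closed_hull_def by (rule closure_below_closed)
  have "A \<subseteq> hull_chain F \<alpha> A 0" by (simp add: closure_below_increasing)
  then have "A \<subseteq> closed_hull F \<alpha> A" unfolding closed_hull_def using closure_below_increasing by blast
  then show "\<exists>\<gamma>\<in>closed_hull F \<alpha> A. \<beta> \<le> \<gamma>" if "\<beta> < \<alpha>" for \<beta> using assms(2) that by blast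
qed

lemma card_le_closed_hull:
  assumes "infinite B" "card_le A B" "\<And>\<delta>. card_le (F \<delta>) B"
  shows "card_le (closed_hull F \<alpha> A) B"
proof -
  have "card_le (\<Union>n. hull_chain F \<alpha> A n) B"
    by (rule card_le_UN_infinite[OF assms(1) card_le_nat_infinite[OF assms(1)]])
      (simp add: card_le_hull_chain[OF assms])
  then show ?thesis unfolding closed_hull_def by (rule card_le_closure_below[OF assms(1)])
qed

lemma card_le_cf_nat_of_acc_pt_UN:
  fixes Y :: "nat \<Rightarrow> 'a::wellorder set"
  assumes acc: "acc_pt (\<Union>n. Y n) \<delta>" and not_acc: "\<And>n. \<not> acc_pt (Y n) \<delta>"
  shows "card_le {..<cf \<delta>} (UNIV :: nat set)"
proof -
  have "\<exists>\<gamma>. \<gamma> < \<delta>" using acc unfolding acc_pt_def by blast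
  then have "\<forall>n. \<exists>\<gamma><\<delta>. \<forall>c\<in>Y n. \<not> (\<gamma> < c \<and> c < \<delta>)"
    using not_acc unfolding acc_pt_def by blast
  from choice[OF this] obtain g where g: "\<forall>n. g n < \<delta> \<and> (\<forall>c\<in>Y n. \<not> (g n < c \<and> c < \<delta>))"
    by blast
  have "\<forall>\<beta><\<delta>. \<exists>\<gamma>\<in>range g. \<beta> \<le> \<gamma>"
  proof (intro allI impI)
    fix \<beta> assume "\<beta> < \<delta>"
    then obtain c n where c: "c \<in> Y n" "\<beta> < c" "c < \<delta>" using acc unfolding acc_pt_def by blast
    then have "\<not> g n < c" using g by blast
    then have "\<beta> \<le> g n" using c(2) by simp
    then show "\<exists>\<gamma>\<in>range g. \<beta> \<le> \<gamma>" by blast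
  qed
  moreover have "range g \<subseteq> {..<\<delta>}" using g by auto
  ultimately have "card_le {..<cf \<delta>} (range g)" by (intro card_le_cf)
  then show ?thesis using card_le_image[of g UNIV] by (rule card_le_trans)
qed

lemma closed_hull_closed_under:
  assumes "\<delta> \<in> closed_hull F \<alpha> A" "\<not> card_le {..<cf \<delta>} (UNIV :: nat set)"
  shows "F \<delta> \<subseteq> closed_hull F \<alpha> A"
proof (cases "\<exists>n. \<delta> \<in> hull_chain F \<alpha> A n")
  case True
  then obtain n where "F \<delta> \<subseteq> hull_chain F \<alpha> A (Suc n)" using hull_chain_Suc_contains by blast
  then show ?thesis unfolding closed_hull_def using closure_below_increasing by blast
next
  case False
  then have acc: "acc_pt (\<Union>n. hull_chain F \<alpha> A n) \<delta>" and "\<delta> < \<alpha>"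
    using assms(1) unfolding closed_hull_def closure_below_def by auto
  have "\<not> acc_pt (hull_chain F \<alpha> A n) \<delta>" for n
    using hull_chain_closed[OF \<open>\<delta> < \<alpha>\<close>] False by blast
  with acc have "card_le {..<cf \<delta>} (UNIV :: nat set)" by (rule card_le_cf_nat_of_acc_pt_UN)
  with assms(2) show ?thesis by blast
qed

lemma generalized_C_sequence_closed_under:
  fixes F :: "nat \<Rightarrow> 'a::wellorder \<Rightarrow> 'a set" and K :: "nat \<Rightarrow> 'b set"
  assumes F_below: "\<And>m \<delta>. \<delta> \<in> S \<Longrightarrow> F m \<delta> \<subseteq> {..<\<delta>}"
    and F_mono: "\<And>m \<delta>. \<delta> \<in> S \<Longrightarrow> F m \<delta> \<subseteq> F (Suc m) \<delta>"
    and F_card: "\<And>m \<delta>. \<delta> \<in> S \<Longrightarrow> card_le (F m \<delta>) (K m)"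
    and K_infinite: "\<And>m. infinite (K m)"
    and S_uncountable_cf: "\<And>\<delta>. \<delta> \<in> S \<Longrightarrow> \<not> card_le {..<cf \<delta>} (UNIV :: nat set)"
  shows "\<exists>e :: 'a \<Rightarrow> nat \<Rightarrow> 'a set.
           (\<forall>\<alpha> m. club_in (e \<alpha> m) \<alpha> \<and> e \<alpha> m \<subseteq> e \<alpha> (Suc m)) \<and>
           (\<forall>\<alpha> m. card_le (e \<alpha> m) ({..<cf \<alpha>} <+> K m) \<and> (\<forall>\<delta>\<in>S \<inter> e \<alpha> m. F m \<delta> \<subseteq> e \<alpha> m))"
proof -
  define A where "A \<alpha> = (SOME A. A \<subseteq> {..<\<alpha>} \<and> (\<forall>\<beta><\<alpha>. \<exists>\<gamma>\<in>A. \<beta> \<le> \<gamma>) \<and> card_eq A {..<cf \<alpha>})"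
    for \<alpha> :: 'a
  have A: "A \<alpha> \<subseteq> {..<\<alpha>} \<and> (\<forall>\<beta><\<alpha>. \<exists>\<gamma>\<in>A \<alpha>. \<beta> \<le> \<gamma>) \<and> card_eq (A \<alpha>) {..<cf \<alpha>}" for \<alpha>
    unfolding A_def by (rule someI_ex[OF cf_witness])
  define G where "G m \<delta> = (if \<delta> \<in> S then F m \<delta> else {})" for m \<delta>
  define e where "e \<alpha> m = closed_hull (G m) \<alpha> (A \<alpha>)" for \<alpha> m
  have "card_le (e \<alpha> m) ({..<cf \<alpha>} <+> K m)" for \<alpha> m
  proof -
    have Plus: "card_le {..<cf \<alpha>} ({..<cf \<alpha>} <+> K m)" "card_le (K m) ({..<cf \<alpha>} <+> K m)"
      unfolding card_le_def by (rule card_of_Plus1, rule card_of_Plus2)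
    have "card_le (A \<alpha>) ({..<cf \<alpha>} <+> K m)"
      using A card_eq_imp_card_le card_le_trans[OF _ Plus(1)] by blast
    moreover have "card_le (G m \<delta>) ({..<cf \<alpha>} <+> K m)" for \<delta>
      unfolding G_def by (simp add: card_le_empty card_le_trans[OF F_card Plus(2)])
    moreover have "infinite ({..<cf \<alpha>} <+> K m)" using K_infinite by simp
    ultimately show ?thesis unfolding e_def by (intro card_le_closed_hull)
  qed
  moreover have "club_in (e \<alpha> m) \<alpha>" for \<alpha> m
    unfolding e_def using A F_below by (intro closed_hull_club) (auto simp: G_def)
  moreover have "e \<alpha> m \<subseteq> e \<alpha> (Suc m)" for \<alpha> m
    unfolding e_def using F_mono by (intro closed_hull_mono_fun) (simp add: G_def)
  moreover have "F m \<delta> \<subseteq> e \<alpha> m" if "\<delta> \<in> S \<inter> e \<alpha> m" for \<alpha> m \<delta>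
    using closed_hull_closed_under[of \<delta> "G m" \<alpha> "A \<alpha>"] that S_uncountable_cf
    unfolding e_def G_def by auto
  ultimately show ?thesis by blast
qed

lemma Cm_subset:
  assumes "club_in (C \<delta>) \<delta>" "c0 \<delta> ` {..<\<sigma>} \<subseteq> C \<delta>"
  shows "Cm c0 C \<sigma> \<delta> m \<subseteq> {..<\<delta>}"
proof -
  have "C \<delta> \<subseteq> {..<\<delta>}" using assms(1) unfolding club_in_def by blast
  then show ?thesis using assms(2) unfolding Cm_def by blast
qed

lemma Cm_mono: "Cm c0 C \<sigma> \<delta> m \<subseteq> Cm c0 C \<sigma> \<delta> (Suc m)"
  unfolding Cm_def by auto

lemma card_le_Cm:
  assumes K: "infinite (K m)" and \<sigma>: "card_le {..<\<sigma>} (K m)" and K_mono: "\<And>i. i \<le> m \<Longrightarrow> K i \<subseteq> K m"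
    and C: "\<And>\<epsilon> i. \<epsilon> < \<sigma> \<Longrightarrow> card_le (C \<delta> \<inter> Iv c0 \<delta> \<epsilon> i) (K i)"
  shows "card_le (Cm c0 C \<sigma> \<delta> m) (K m)"
  unfolding Cm_def
proof (rule card_le_Un_infinite[OF K])
  show "card_le (c0 \<delta> ` {..<\<sigma>}) (K m)" by (rule card_le_trans[OF card_le_image \<sigma>])
  have "card_le (C \<delta> \<inter> Iv c0 \<delta> \<epsilon> i) (K m)" if "\<epsilon> < \<sigma>" "i \<le> m" for \<epsilon> i
    using C[OF that(1)] card_le_subset[OF K_mono[OF that(2)]] by (rule card_le_trans)
  then have "card_le (\<Union>i\<in>{..m}. C \<delta> \<inter> Iv c0 \<delta> \<epsilon> i) (K m)" if "\<epsilon> < \<sigma>" for \<epsilon>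
    using that by (intro card_le_UN_infinite[OF K card_le_finite_infinite[OF finite_atMost K]]) auto
  then show "card_le (\<Union>\<epsilon>\<in>{..<\<sigma>}. \<Union>i\<in>{..m}. C \<delta> \<inter> Iv c0 \<delta> \<epsilon> i) (K m)"
    by (intro card_le_UN_infinite[OF K \<sigma>]) simp
qed

theorem lemma5p6:
  fixes \<mu> \<sigma> :: "'a::wellorder"
    and S :: "'a set"
    and \<mu>s :: "nat \<Rightarrow> 'a"
    and c0 :: "'a \<Rightarrow> 'a \<Rightarrow> 'a"
    and C :: "'a \<Rightarrow> 'a set"
  assumes mu_card: "is_cardinal \<mu>"
    and mu_cf: "cf \<mu> = omega_o"
    and lambda_succ: "(\<forall>x::'a. card_le {..<x} {..<\<mu>}) \<and> \<not> card_le (UNIV::'a set) {..<\<mu>}"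
    and sigma_reg: "regular \<sigma>"
    and sigma_gt: "omega_o < \<sigma>"
    and sigma_lt: "\<sigma> < \<mu>"
    and S_cf: "S \<subseteq> {\<delta>. cf \<delta> = \<sigma>}"
    and S_stat: "stationary S"
    and mus_reg: "\<forall>i. regular (\<mu>s i)"
    and mus_mono: "strict_mono \<mu>s"
    and mus_lt: "\<forall>i. \<mu>s i < \<mu>"
    and mus_cof: "\<forall>x<\<mu>. \<exists>i. x < \<mu>s i"
    and sigma_mus: "\<sigma> < \<mu>s 0"
    and c0_mono: "\<forall>\<delta>\<in>S. strict_mono_on {..<\<sigma>} (c0 \<delta>)"
    and c0_club: "\<forall>\<delta>\<in>S. club_in (c0 \<delta> ` {..<\<sigma>}) \<delta>"
    and c0_guess: "\<forall>E. club E \<longrightarrow> stationary {\<delta>\<in>S. c0 \<delta> ` {..<\<sigma>} \<subseteq> E}"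
    and C_club: "\<forall>\<delta>\<in>S. club_in (C \<delta>) \<delta>"
    and C_c0: "\<forall>\<delta>\<in>S. c0 \<delta> ` {..<\<sigma>} \<subseteq> C \<delta>"
    and C_size: "\<forall>\<delta>\<in>S. \<forall>\<epsilon><\<sigma>. \<forall>m.
                   card_le (C \<delta> \<inter> Iv c0 \<delta> \<epsilon> m) {..<csucc (\<mu>s m)}"
    and C_nacc_cf: "\<forall>\<delta>\<in>S. \<forall>\<epsilon><\<sigma>. \<forall>m. \<forall>\<alpha>\<in>nacc (C \<delta>) \<inter> Iv c0 \<delta> \<epsilon> m.
                   csucc (\<mu>s m) < cf \<alpha>"
    and C_guess: "\<forall>E. club E \<longrightarrow>
                   stationary {\<delta>\<in>S. \<forall>\<epsilon><\<sigma>. \<forall>m. E \<inter> nacc (C \<delta>) \<inter> Iv c0 \<delta> \<epsilon> m \<noteq> {}}"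
  shows "\<exists>e :: 'a \<Rightarrow> nat \<Rightarrow> 'a set.
           (\<forall>\<alpha> m. club_in (e \<alpha> m) \<alpha> \<and> e \<alpha> m \<subseteq> e \<alpha> (Suc m)) \<and>
           (\<forall>\<alpha> m. card_le (e \<alpha> m) ({..<cf \<alpha>} <+> {..<csucc (\<mu>s m)}) \<and>
                  (\<forall>\<delta>\<in>S \<inter> e \<alpha> m. Cm c0 C \<sigma> \<delta> m \<subseteq> e \<alpha> m))"
proof -
  have "\<mu> \<noteq> zero_o" using sigma_lt zero_o_le[of \<sigma>] by auto
  then have "omega_o \<noteq> (zero_o :: 'a)" using mu_cf cf_eq_zero_o by metis
  then have \<sigma>_uncountable: "\<not> card_le {..<\<sigma>} (UNIV :: nat set)"
    using regular_uncountable[OF sigma_reg sigma_gt] by blast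
  then have "infinite {..<\<sigma>}" using card_le_finite_infinite[of "{..<\<sigma>}" UNIV] by auto
  have \<mu>s_mono: "\<mu>s i \<le> \<mu>s m" if "i \<le> m" for i m
    using strict_mono_less_eq[OF mus_mono] that by blast
  have K_mono: "{..<csucc (\<mu>s i)} \<subseteq> {..<csucc (\<mu>s m)}" if "i \<le> m" for i m
    using csucc_mono_below_cardinal[OF mu_card \<mu>s_mono[OF that]] mus_lt by auto
  have "\<sigma> < csucc (\<mu>s m)" for m
  proof -
    have "\<sigma> < \<mu>s m" using less_le_trans[OF sigma_mus \<mu>s_mono] by simp
    also have "\<dots> < csucc (\<mu>s m)" using less_csucc_below_cardinal[OF mu_card] mus_lt by blast
    finally show ?thesis .
  qed
  then have \<sigma>_K: "{..<\<sigma>} \<subseteq> {..<csucc (\<mu>s m)}" for m by (simp add: less_imp_le)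
  show ?thesis
  proof (rule generalized_C_sequence_closed_under)
    show "infinite {..<csucc (\<mu>s m)}" for m using \<sigma>_K \<open>infinite {..<\<sigma>}\<close> infinite_super by blast
    then show "card_le (Cm c0 C \<sigma> \<delta> m) {..<csucc (\<mu>s m)}" if "\<delta> \<in> S" for \<delta> m
      using card_le_Cm[of "\<lambda>i. {..<csucc (\<mu>s i)}", OF _ card_le_subset[OF \<sigma>_K] K_mono]
        C_size that by blast
    show "Cm c0 C \<sigma> \<delta> m \<subseteq> {..<\<delta>}" if "\<delta> \<in> S" for \<delta> m
      using C_club C_c0 that by (intro Cm_subset) auto
    show "Cm c0 C \<sigma> \<delta> m \<subseteq> Cm c0 C \<sigma> \<delta> (Suc m)" if "\<delta> \<in> S" for \<delta> m
      by (rule Cm_mono)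
    show "\<not> card_le {..<cf \<delta>} (UNIV :: nat set)" if "\<delta> \<in> S" for \<delta>
      using S_cf \<sigma>_uncountable that by auto
  qed
qed

end
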